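(* Let $n\ge 1$, $V=(\mathbb F_2)^n$, let $r\ge 1$ and let $\rho_1,\dots,\rho_r\in\mathrm{Sym}(V)$. Let $\Phi$ be the $r$-round long-key Feistel network whose encryption functions are \[ E_{(k_1,\dots,k_r)}=\bar\rho_1\sigma_{(0,k_1)}\bar\rho_2\sigma_{(0,k_2)}\cdots\bar\rho_r\sigma_{(0,k_r)},\qquad (k_1,\dots,k_r)\in V^r, \] and let $\Gamma(\Phi)=\langle E_{(k_1,\dots,k_r)}\mid (k_1,\dots,k_r)\in V^r\rangle\le \mathrm{Sym}(V\times V)$. Then \[ \langle \bar\rho_1\bar\rho_2\cdots\bar\rho_r,\ T(V\times V)\rangle \le \Gamma(\Phi). \] In particular $T(V\times V)\le\Gamma(\Phi)$.
   Context: Maps act on the right ($x\mapsto xf$) and products of maps are composed left to right ($fg$ means first $f$, then $g$); $+$ is bitwise XOR on $V$. For $\rho\in\mathrm{Sym}(V)$, the Feistel operator induced by $\rho$ is the map $\bar\rho: V\times V\to V\times V$, $(x_1,x_2)\bar\rho=(x_2,\ x_1+x_2\rho)$. For $(h,k)\in V\times V$, $\sigma_{(h,k)}:V\times V\to V\times V$ is defined by $(x_1,x_2)\sigma_{(h,k)}=(x_1+k,\ x_2+h)$, and $T(V\times V)=\{\sigma_{(h,k)}\mid (h,k)\in V\times V\}$. *)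

theory Defs
  imports "HOL-Analysis.Analysis" "HOL-Library.Z2" "HOL-Algebra.Bij" "HOL-Algebra.Generated_Groups"
begin

text \<open>V = (F_2)^n is modelled as bit ^ 'n for a finite index type 'n (so n >= 1);
  addition on bit ^ 'n is componentwise addition in F_2, i.e. bitwise XOR.
  Maps are HOL functions; the paper's left-to-right product f g (first f, then g)
  is the HOL composition g o f.\<close>

definition feistel :: "(bit ^ 'n \<Rightarrow> bit ^ 'n) \<Rightarrow> (bit ^ 'n) \<times> (bit ^ 'n) \<Rightarrow> (bit ^ 'n) \<times> (bit ^ 'n)"
  where "feistel \<rho> = (\<lambda>(x1, x2). (x2, x1 + \<rho> x2))"

definition sigma :: "(bit ^ 'n) \<times> (bit ^ 'n) \<Rightarrow> (bit ^ 'n) \<times> (bit ^ 'n) \<Rightarrow> (bit ^ 'n) \<times> (bit ^ 'n)"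
  where "sigma hk = (\<lambda>(x1, x2). (x1 + snd hk, x2 + fst hk))"

definition transl_group :: "((bit ^ 'n) \<times> (bit ^ 'n) \<Rightarrow> (bit ^ 'n) \<times> (bit ^ 'n)) set"
  where "transl_group = {sigma hk | hk. True}"

definition enc :: "(bit ^ 'n \<Rightarrow> bit ^ 'n) list \<Rightarrow> (bit ^ 'n) list
    \<Rightarrow> (bit ^ 'n) \<times> (bit ^ 'n) \<Rightarrow> (bit ^ 'n) \<times> (bit ^ 'n)"
  where "enc rhos ks = fold (\<lambda>(\<rho>, k) acc. sigma (0, k) \<circ> feistel \<rho> \<circ> acc) (zip rhos ks) id"

definition feistel_prod :: "(bit ^ 'n \<Rightarrow> bit ^ 'n) list \<Rightarrow> (bit ^ 'n) \<times> (bit ^ 'n) \<Rightarrow> (bit ^ 'n) \<times> (bit ^ 'n)"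
  where "feistel_prod rhos = fold (\<lambda>\<rho> acc. feistel \<rho> \<circ> acc) rhos id"

definition Gamma :: "(bit ^ 'n \<Rightarrow> bit ^ 'n) list \<Rightarrow> ((bit ^ 'n) \<times> (bit ^ 'n) \<Rightarrow> (bit ^ 'n) \<times> (bit ^ 'n)) set"
  where "Gamma rhos = generate (BijGroup UNIV) {enc rhos ks | ks. length ks = length rhos}"

end

theory Submission
  imports Defs
begin

text \<open>Write maps on the right and let \<open>P\<close> be the product of the \<open>r\<close> Feistel operators. With all
  round keys zero the encryption function is \<open>P\<close>, so \<open>P \<in> \<Gamma>(\<Phi>)\<close>. A single key \<open>k\<close> in the
  last round gives \<open>P \<sigma>(0,k)\<close>, and a single key \<open>k\<close> in the round before the last gives
  \<open>P \<sigma>(k,0)\<close>, because \<open>\<sigma>(0,k) F = F \<sigma>(k,0)\<close> for every Feistel operator \<open>F\<close>; for a single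
  round this identity reads \<open>P \<sigma>(k,0) = \<sigma>(0,k) P\<close> instead. Cancelling \<open>P\<close> puts both kinds
  of translations into \<open>\<Gamma>(\<Phi>)\<close>, and together they generate \<open>T(V \<times> V)\<close>.\<close>

lemma carrier_BijGroup_UNIV: "carrier (BijGroup UNIV) = {f. bij f}"
  by (auto simp: BijGroup_def Bij_def)

lemma mult_BijGroup_UNIV:
  "bij f \<Longrightarrow> bij g \<Longrightarrow> f \<otimes>\<^bsub>BijGroup UNIV\<^esub> g = f \<circ> g"
  by (simp add: BijGroup_def compose_def Bij_def restrict_def comp_def)

lemma subgroup_BijGroup_UNIV_comp_closed:
  assumes "subgroup H (BijGroup UNIV)" and "f \<in> H" and "g \<in> H"
  shows "f \<circ> g \<in> H"
proof -
  have "bij f" "bij g"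
    using assms subgroup.subset[OF assms(1)] by (auto simp: carrier_BijGroup_UNIV)
  then show ?thesis
    using subgroup.m_closed[OF assms] by (simp add: mult_BijGroup_UNIV)
qed

lemma subgroup_BijGroup_UNIV_cancel_right:
  assumes H: "subgroup H (BijGroup UNIV)" and "bij f" and "g \<in> H" and "f \<circ> g \<in> H"
  shows "f \<in> H"
proof -
  interpret group "BijGroup UNIV" by (rule group_BijGroup)
  have f: "f \<in> carrier (BijGroup UNIV)" and g: "g \<in> carrier (BijGroup UNIV)"
    using assms subgroup.subset[OF H] by (auto simp: carrier_BijGroup_UNIV)
  then have "f \<otimes>\<^bsub>BijGroup UNIV\<^esub> g \<in> H"
    using \<open>f \<circ> g \<in> H\<close> by (simp add: carrier_BijGroup_UNIV mult_BijGroup_UNIV)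
  then have "(f \<otimes>\<^bsub>BijGroup UNIV\<^esub> g) \<otimes>\<^bsub>BijGroup UNIV\<^esub> inv\<^bsub>BijGroup UNIV\<^esub> g \<in> H"
    using \<open>g \<in> H\<close> H by (simp add: subgroup.m_closed subgroup.m_inv_closed)
  then show ?thesis
    using f g by (simp add: m_assoc)
qed

lemma bij_feistel: "bij (feistel \<rho>)"
proof (rule o_bij)
  show "(\<lambda>(y1, y2). (y2 + \<rho> y1, y1)) \<circ> feistel \<rho> = id"
    by (auto simp: feistel_def fun_eq_iff add.assoc vec_eq_iff)
  show "feistel \<rho> \<circ> (\<lambda>(y1, y2). (y2 + \<rho> y1, y1)) = id"
    by (auto simp: feistel_def fun_eq_iff add.assoc vec_eq_iff)
qed

lemma bij_sigma: "bij (sigma hk)"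
  by (rule o_bij[where g = "sigma hk"]) (auto simp: sigma_def fun_eq_iff add.assoc vec_eq_iff)

lemma sigma_zero: "sigma (0, 0) = id"
  by (auto simp: sigma_def fun_eq_iff)

lemma sigma_decompose: "sigma (h, k) = sigma (h, 0) \<circ> sigma (0, k)"
  by (auto simp: sigma_def fun_eq_iff)

lemma sigma_comp_feistel: "sigma (k, 0) \<circ> feistel \<rho> = feistel \<rho> \<circ> sigma (0, k)"
  by (auto simp: sigma_def feistel_def fun_eq_iff add_ac)

lemma fold_round_comp:
  fixes acc :: "(bit ^ 'n) \<times> (bit ^ 'n) \<Rightarrow> (bit ^ 'n) \<times> (bit ^ 'n)"
  shows "fold (\<lambda>(\<rho>, k) acc. sigma (0, k) \<circ> feistel \<rho> \<circ> acc) xs acc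
     = fold (\<lambda>(\<rho>, k) acc. sigma (0, k) \<circ> feistel \<rho> \<circ> acc) xs id \<circ> acc"
proof (induction xs arbitrary: acc)
  case (Cons x xs)
  obtain \<rho> k where x: "x = (\<rho>, k)" by fastforce
  show ?case
    using Cons.IH[of "sigma (0, k) \<circ> feistel \<rho> \<circ> acc"] Cons.IH[of "sigma (0, k) \<circ> feistel \<rho>"]
    by (simp add: x comp_assoc)
qed simp

lemma enc_append:
  "length rs = length ks \<Longrightarrow> enc (rs @ rs') (ks @ ks') = enc rs' ks' \<circ> enc rs ks"
  unfolding enc_def by (simp flip: fold_round_comp)

lemma enc_Nil: "enc [] ks = id"
  by (simp add: enc_def)

lemma enc_Cons: "enc (\<rho> # rhos) (k # ks) = enc rhos ks \<circ> sigma (0, k) \<circ> feistel \<rho>"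
  using enc_append[of "[\<rho>]" "[k]" rhos ks] by (simp add: enc_def comp_assoc)

lemma enc_zero_keys: "enc rhos (replicate (length rhos) 0) = feistel_prod rhos"
proof (induction rhos rule: rev_induct)
  case (snoc \<rho> rhos)
  have "enc (rhos @ [\<rho>]) (replicate (length rhos) 0 @ [0]) = feistel \<rho> \<circ> feistel_prod rhos"
    by (simp add: enc_append enc_Cons enc_Nil sigma_zero snoc)
  then show ?case
    by (simp add: replicate_append_same feistel_prod_def)
qed (simp add: enc_Nil feistel_prod_def)

lemma bij_enc: "bij (enc rhos ks)"
proof (induction rhos arbitrary: ks)
  case (Cons \<rho> rhos)
  note IH = Cons.IH
  show ?case
  proof (cases ks)
    case Nil
    then show ?thesis
      using bij_id by (simp add: enc_def id_def)
  next
    case (Cons k ks')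
    show ?thesis
      unfolding Cons enc_Cons by (intro bij_comp bij_sigma bij_feistel IH)
  qed
qed (simp add: enc_Nil)

lemma subgroup_Gamma: "subgroup (Gamma rhos) (BijGroup UNIV)"
  unfolding Gamma_def
  by (rule group.generate_is_subgroup[OF group_BijGroup])
    (auto simp: carrier_BijGroup_UNIV bij_enc)

lemma enc_in_Gamma: "length ks = length rhos \<Longrightarrow> enc rhos ks \<in> Gamma rhos"
  unfolding Gamma_def by (rule generate.incl) blast

lemma feistel_prod_in_Gamma: "feistel_prod rhos \<in> Gamma rhos"
  using enc_in_Gamma[of "replicate (length rhos) 0" rhos] by (simp add: enc_zero_keys)

lemma sigma_zero_key_in_Gamma:
  assumes "rhos \<noteq> []"
  shows "sigma (0, k) \<in> Gamma rhos"
proof (rule subgroup_BijGroup_UNIV_cancel_right[OF subgroup_Gamma bij_sigma feistel_prod_in_Gamma])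
  obtain rs \<rho> where rhos: "rhos = rs @ [\<rho>]"
    using assms rev_exhaust by blast
  have "sigma (0, k) \<circ> feistel_prod rhos = enc rhos (replicate (length rs) 0 @ [k])"
    by (simp add: rhos enc_append enc_Cons enc_Nil enc_zero_keys feistel_prod_def comp_assoc)
  then show "sigma (0, k) \<circ> feistel_prod rhos \<in> Gamma rhos"
    by (simp add: rhos enc_in_Gamma)
qed

lemma sigma_key_zero_in_Gamma:
  assumes "rhos \<noteq> []"
  shows "sigma (k, 0) \<in> Gamma rhos"
proof (rule subgroup_BijGroup_UNIV_cancel_right[OF subgroup_Gamma bij_sigma feistel_prod_in_Gamma])
  obtain rs \<rho> where rhos: "rhos = rs @ [\<rho>]"
    using assms rev_exhaust by blast
  have shift: "sigma (k, 0) \<circ> feistel_prod rhos = feistel \<rho> \<circ> sigma (0, k) \<circ> feistel_prod rs"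
    by (simp add: rhos feistel_prod_def sigma_comp_feistel flip: comp_assoc)
  show "sigma (k, 0) \<circ> feistel_prod rhos \<in> Gamma rhos"
  proof (cases rs rule: rev_exhaust)
    case Nil
    then have "sigma (k, 0) \<circ> feistel_prod rhos = feistel_prod rhos \<circ> sigma (0, k)"
      using shift by (simp add: rhos feistel_prod_def)
    then show ?thesis
      using subgroup_BijGroup_UNIV_comp_closed[OF subgroup_Gamma feistel_prod_in_Gamma
          sigma_zero_key_in_Gamma[OF assms]] by simp
  next
    case (snoc rs' \<rho>')
    have "enc rhos (replicate (length rs') 0 @ [k, 0]) = feistel \<rho> \<circ> sigma (0, k) \<circ> feistel_prod rs"
      by (simp add: rhos snoc enc_append enc_Cons enc_Nil enc_zero_keys sigma_zero
          feistel_prod_def comp_assoc)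
    moreover have "enc rhos (replicate (length rs') 0 @ [k, 0]) \<in> Gamma rhos"
      by (rule enc_in_Gamma) (simp add: rhos snoc)
    ultimately show ?thesis
      by (simp only: shift)
  qed
qed

lemma transl_group_subset_Gamma: "rhos \<noteq> [] \<Longrightarrow> transl_group \<subseteq> Gamma rhos"
  unfolding transl_group_def
  using subgroup_BijGroup_UNIV_comp_closed[OF subgroup_Gamma sigma_key_zero_in_Gamma
      sigma_zero_key_in_Gamma]
  by (force simp flip: sigma_decompose)

theorem lemma4p1:
  fixes rhos :: "(bit ^ 'n \<Rightarrow> bit ^ 'n) list"
  assumes "length rhos \<ge> 1"
    and "\<forall>\<rho> \<in> set rhos. bij \<rho>"
  shows "generate (BijGroup UNIV) (insert (feistel_prod rhos) transl_group) \<subseteq> Gamma rhos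
         \<and> transl_group \<subseteq> Gamma rhos"
proof -
  have "rhos \<noteq> []"
    using assms(1) by auto
  then have T: "transl_group \<subseteq> Gamma rhos"
    by (rule transl_group_subset_Gamma)
  moreover have "generate (BijGroup UNIV) (insert (feistel_prod rhos) transl_group) \<subseteq> Gamma rhos"
    by (rule group.generate_subgroup_incl[OF group_BijGroup _ subgroup_Gamma])
      (simp add: T feistel_prod_in_Gamma)
  ultimately show ?thesis
    by blast
qed

end
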